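(* Let $W$ be a Coxeter group, $w\in W$, $J\subseteq S$, and suppose $w=w^Jw_J$ is a Billey--Postnikov decomposition such that $\supp(w^J)\cap\supp(w_J)=\{s\}$ for some $s\in S$. Then the middle multiplication map $\phi: x\mapsto x^J\, s\, x_J$ is an automorphism of the Bruhat graph $\Gamma(e,w)$.
   Context: $(W,S)$ is a Coxeter system with reflections $T$, length $\ell$, Bruhat order $\le$, identity $e$; $\Gamma(e,w)$ is the simple undirected graph on $[e,w]$ with edges $\{x,y\}$ whenever $y=xt$, $t\in T$. For $J\subseteq S$, $W_J$ is the subgroup generated by $J$; each $x\in W$ factors uniquely as $x=x^Jx_J$ with $x_J\in W_J$ and $x^J$ the unique minimal-length element of $xW_J$ (then $\ell(x)=\ell(x^J)+\ell(x_J)$). $\supp(x)$ is the set of simple generators appearing in a reduced word of $x$, and $D_L(x)=\{s\in S:\ell(sx)<\ell(x)\}$. The decomposition $w=w^Jw_J$ is a Billey--Postnikov (BP) decomposition if $\supp(w^J)\cap J\subseteq D_L(w_J)$. *)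

theory Defs
  imports "HOL-Algebra.Group"
begin

definition wprod :: "('a, 'b) monoid_scheme \<Rightarrow> 'a list \<Rightarrow> 'a" where
  "wprod W xs = foldr (\<lambda>x y. x \<otimes>\<^bsub>W\<^esub> y) xs \<one>\<^bsub>W\<^esub>"

definition coxeter_relators :: "('a, 'b) monoid_scheme \<Rightarrow> 'a set \<Rightarrow> 'a list set" where
  "coxeter_relators W S =
     {[s, s] | s. s \<in> S} \<union>
     {concat (replicate m [s, t]) | s t m. s \<in> S \<and> t \<in> S \<and> m > 0 \<and>
                                   (s \<otimes>\<^bsub>W\<^esub> t) [^]\<^bsub>W\<^esub> m = \<one>\<^bsub>W\<^esub>}"

inductive word_equiv :: "('a, 'b) monoid_scheme \<Rightarrow> 'a set \<Rightarrow> 'a list \<Rightarrow> 'a list \<Rightarrow> bool"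
  for W S where
  refl: "word_equiv W S u u"
| sym: "word_equiv W S u v \<Longrightarrow> word_equiv W S v u"
| trans: "word_equiv W S u v \<Longrightarrow> word_equiv W S v x \<Longrightarrow> word_equiv W S u x"
| rel: "r \<in> coxeter_relators W S \<Longrightarrow> word_equiv W S (u @ r @ v) (u @ v)"

text \<open>(W,S) is a Coxeter system: W is a group generated by the set S of involutions
  and every relation among the generators is a consequence of the Coxeter relations
  (s t)^{m(s,t)} = 1, i.e. W has the Coxeter presentation on S.\<close>
definition coxeter_system :: "('a, 'b) monoid_scheme \<Rightarrow> 'a set \<Rightarrow> bool" where
  "coxeter_system W S \<longleftrightarrow>
     group W \<and> S \<subseteq> carrier W \<and> \<one>\<^bsub>W\<^esub> \<notin> S \<and>
     (\<forall>s\<in>S. s \<otimes>\<^bsub>W\<^esub> s = \<one>\<^bsub>W\<^esub>) \<and>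
     (\<forall>x\<in>carrier W. \<exists>xs\<in>lists S. wprod W xs = x) \<and>
     (\<forall>xs\<in>lists S. wprod W xs = \<one>\<^bsub>W\<^esub> \<longrightarrow> word_equiv W S xs [])"

definition cox_length :: "('a, 'b) monoid_scheme \<Rightarrow> 'a set \<Rightarrow> 'a \<Rightarrow> nat" where
  "cox_length W S x = (LEAST n. \<exists>xs\<in>lists S. length xs = n \<and> wprod W xs = x)"

definition reduced_word :: "('a, 'b) monoid_scheme \<Rightarrow> 'a set \<Rightarrow> 'a list \<Rightarrow> 'a \<Rightarrow> bool" where
  "reduced_word W S xs x \<longleftrightarrow> xs \<in> lists S \<and> wprod W xs = x \<and> length xs = cox_length W S x"

definition reflections :: "('a, 'b) monoid_scheme \<Rightarrow> 'a set \<Rightarrow> 'a set" where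
  "reflections W S = {w \<otimes>\<^bsub>W\<^esub> s \<otimes>\<^bsub>W\<^esub> inv\<^bsub>W\<^esub> w | w s. w \<in> carrier W \<and> s \<in> S}"

definition bruhat_step :: "('a, 'b) monoid_scheme \<Rightarrow> 'a set \<Rightarrow> 'a \<Rightarrow> 'a \<Rightarrow> bool" where
  "bruhat_step W S x y \<longleftrightarrow> x \<in> carrier W \<and>
     (\<exists>t\<in>reflections W S. y = x \<otimes>\<^bsub>W\<^esub> t) \<and> cox_length W S x < cox_length W S y"

definition bruhat_le :: "('a, 'b) monoid_scheme \<Rightarrow> 'a set \<Rightarrow> 'a \<Rightarrow> 'a \<Rightarrow> bool" where
  "bruhat_le W S x y \<longleftrightarrow> x \<in> carrier W \<and> y \<in> carrier W \<and> (bruhat_step W S)\<^sup>*\<^sup>* x y"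

definition bruhat_interval :: "('a, 'b) monoid_scheme \<Rightarrow> 'a set \<Rightarrow> 'a \<Rightarrow> 'a \<Rightarrow> 'a set" where
  "bruhat_interval W S u v = {x. bruhat_le W S u x \<and> bruhat_le W S x v}"

definition bruhat_edge :: "('a, 'b) monoid_scheme \<Rightarrow> 'a set \<Rightarrow> 'a \<Rightarrow> 'a \<Rightarrow> bool" where
  "bruhat_edge W S x y \<longleftrightarrow> (\<exists>t\<in>reflections W S. y = x \<otimes>\<^bsub>W\<^esub> t)"

definition bruhat_graph_automorphism ::
  "('a, 'b) monoid_scheme \<Rightarrow> 'a set \<Rightarrow> 'a \<Rightarrow> ('a \<Rightarrow> 'a) \<Rightarrow> bool" where
  "bruhat_graph_automorphism W S w \<phi> \<longleftrightarrow>
     (let V = bruhat_interval W S \<one>\<^bsub>W\<^esub> w in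
       bij_betw \<phi> V V \<and>
       (\<forall>x\<in>V. \<forall>y\<in>V. bruhat_edge W S x y \<longleftrightarrow> bruhat_edge W S (\<phi> x) (\<phi> y)))"

definition parabolic :: "('a, 'b) monoid_scheme \<Rightarrow> 'a set \<Rightarrow> 'a set" where
  "parabolic W J = {wprod W xs | xs. xs \<in> lists J}"

definition min_rep :: "('a, 'b) monoid_scheme \<Rightarrow> 'a set \<Rightarrow> 'a set \<Rightarrow> 'a \<Rightarrow> 'a" where
  "min_rep W S J x = (THE u. u \<in> {x \<otimes>\<^bsub>W\<^esub> h | h. h \<in> parabolic W J} \<and>
      (\<forall>v\<in>{x \<otimes>\<^bsub>W\<^esub> h | h. h \<in> parabolic W J}. v \<noteq> u \<longrightarrow> cox_length W S u < cox_length W S v))"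

definition par_part :: "('a, 'b) monoid_scheme \<Rightarrow> 'a set \<Rightarrow> 'a set \<Rightarrow> 'a \<Rightarrow> 'a" where
  "par_part W S J x = inv\<^bsub>W\<^esub> (min_rep W S J x) \<otimes>\<^bsub>W\<^esub> x"

text \<open>Support: generators appearing in a reduced word (independent of the choice).\<close>
definition supp :: "('a, 'b) monoid_scheme \<Rightarrow> 'a set \<Rightarrow> 'a \<Rightarrow> 'a set" where
  "supp W S x = \<Union>{set xs | xs. reduced_word W S xs x}"

definition left_descents :: "('a, 'b) monoid_scheme \<Rightarrow> 'a set \<Rightarrow> 'a \<Rightarrow> 'a set" where
  "left_descents W S x = {s\<in>S. cox_length W S (s \<otimes>\<^bsub>W\<^esub> x) < cox_length W S x}"

definition BP_decomposition :: "('a, 'b) monoid_scheme \<Rightarrow> 'a set \<Rightarrow> 'a set \<Rightarrow> 'a \<Rightarrow> bool" where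
  "BP_decomposition W S J w \<longleftrightarrow>
     supp W S (min_rep W S J w) \<inter> J \<subseteq> left_descents W S (par_part W S J w)"

end

theory Submission
  imports Defs "HOL-Library.Sublist"
begin

text \<open>
  By the subword property every x \<le> w is a product a b of a subword a of a reduced word of
  w^J and a subword b of a reduced word of w_J; by the BP condition s is a left descent of
  w_J, so the latter word may be chosen to start with s. Thus a \<in> W_A, where A = supp(w^J),
  and b \<in> W_J. As A \<inter> J \<subseteq> {s}, the W_J-part of a lies in W_{s} = {e, s} and commutes with s,
  so \<phi>(a b) = a s b, which is again a subword of w: \<phi> maps [e, w] to itself, and it is an
  involution. If x = a b and y = c d span an edge, then conjugating x\<inverse> y by b gives a
  reflection \<alpha> \<beta> with \<alpha> = a\<inverse> c \<in> W_A and \<beta> = d b\<inverse> \<in> W_J. This reflection occurs among the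
  reflections of the concatenated word, which forces \<alpha> or \<beta> into W_{A \<inter> J} \<subseteq> {e, s}; then
  \<phi>(x)\<inverse> \<phi>(y) = b\<inverse> s \<alpha> s \<beta> b is conjugate to \<alpha> \<beta>.

  The Coxeter theory needed (exchange condition, subword property, minimal coset
  representatives) is derived from the presentation via Bjorner--Brenti's reflection
  cocycle \<open>\<eta>\<close>.
\<close>

lemma (in group) inv_mult_cancel_left [simp]:
  "x \<in> carrier G \<Longrightarrow> y \<in> carrier G \<Longrightarrow> inv x \<otimes> (x \<otimes> y) = y"
  by (simp add: m_assoc[symmetric])

lemma (in group) mult_inv_cancel_left [simp]:
  "x \<in> carrier G \<Longrightarrow> y \<in> carrier G \<Longrightarrow> x \<otimes> (inv x \<otimes> y) = y"
  by (simp add: m_assoc[symmetric])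

lemma lists_take [intro]: "xs \<in> lists A \<Longrightarrow> take i xs \<in> lists A"
  by (auto dest: in_set_takeD)

lemma lists_drop [intro]: "xs \<in> lists A \<Longrightarrow> drop i xs \<in> lists A"
  by (auto dest: in_set_dropD)

lemma lists_nth [intro]: "xs \<in> lists A \<Longrightarrow> i < length xs \<Longrightarrow> xs ! i \<in> A"
  by (simp add: in_lists_conv_set)

lemma lists_subseq: "subseq ys xs \<Longrightarrow> xs \<in> lists A \<Longrightarrow> ys \<in> lists A"
  by (induct rule: list_emb.induct) auto

lemma subseq_snoc_cases:
  assumes "subseq ys (xs @ [x])"
  shows "subseq ys xs \<or> (\<exists>ys'. ys = ys' @ [x] \<and> subseq ys' xs)"
proof -
  obtain a b where ab: "ys = a @ b" "subseq a xs" "subseq b [x]"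
    using assms by (auto elim: subseq_appendE)
  moreover have "b = [] \<or> b = [x]"
    using ab(3) by (cases b) (auto split: if_splits)
  ultimately show ?thesis by auto
qed

definition del_nth :: "nat \<Rightarrow> 'a list \<Rightarrow> 'a list" where
  "del_nth i xs = take i xs @ drop (Suc i) xs"

lemma length_del_nth: "i < length xs \<Longrightarrow> length (del_nth i xs) = length xs - 1"
  unfolding del_nth_def by simp

lemma in_set_del_nthD [dest]: "x \<in> set (del_nth i xs) \<Longrightarrow> x \<in> set xs"
  unfolding del_nth_def by (auto dest: in_set_takeD in_set_dropD)

lemma lists_del_nth [intro]: "xs \<in> lists A \<Longrightarrow> del_nth i xs \<in> lists A"
  by auto

lemma subseq_del_nth: "subseq (del_nth i xs) xs"
proof -
  have "subseq (drop (Suc i) xs) (drop i xs)"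
    using suffix_drop[of 1 "drop i xs"] by (simp add: suffix_imp_subseq)
  then show ?thesis
    unfolding del_nth_def by (metis append_take_drop_id subseq_append')
qed

lemma del_nth_append:
  "del_nth i (xs @ ys) =
    (if i < length xs then del_nth i xs @ ys else xs @ del_nth (i - length xs) ys)"
  unfolding del_nth_def by (simp add: Suc_diff_le)

locale coxeter = group W for W :: "('a, 'b) monoid_scheme" (structure) +
  fixes S :: "'a set"
  assumes coxeter: "coxeter_system W S"
begin

abbreviation len :: "'a \<Rightarrow> nat" where "len \<equiv> cox_length W S"
abbreviation T :: "'a set" where "T \<equiv> reflections W S"

lemma S_carrier [simp]: "s \<in> S \<Longrightarrow> s \<in> carrier W"
  using coxeter unfolding coxeter_system_def by auto

lemma one_notin_S: "\<one> \<notin> S"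
  using coxeter unfolding coxeter_system_def by auto

lemma S_square [simp]: "s \<in> S \<Longrightarrow> s \<otimes> s = \<one>"
  using coxeter unfolding coxeter_system_def by auto

lemma S_square_left [simp]: "s \<in> S \<Longrightarrow> x \<in> carrier W \<Longrightarrow> s \<otimes> (s \<otimes> x) = x"
  by (simp add: m_assoc[symmetric])

lemma S_inv [simp]: "s \<in> S \<Longrightarrow> inv s = s"
  by (simp add: inv_equality)

lemma S_generates: "x \<in> carrier W \<Longrightarrow> \<exists>xs\<in>lists S. wprod W xs = x"
  using coxeter unfolding coxeter_system_def by auto

lemma S_presentation: "xs \<in> lists S \<Longrightarrow> wprod W xs = \<one> \<Longrightarrow> word_equiv W S xs []"
  using coxeter unfolding coxeter_system_def by auto

lemma wprod_Nil [simp]: "wprod W [] = \<one>"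
  by (simp add: wprod_def)

lemma wprod_Cons [simp]: "wprod W (x # xs) = x \<otimes> wprod W xs"
  by (simp add: wprod_def)

lemma wprod_closed [simp]: "xs \<in> lists S \<Longrightarrow> wprod W xs \<in> carrier W"
  by (induct xs) auto

lemma wprod_take_closed [simp]: "xs \<in> lists S \<Longrightarrow> wprod W (take i xs) \<in> carrier W"
  by (rule wprod_closed, rule lists_take)

lemma wprod_drop_closed [simp]: "xs \<in> lists S \<Longrightarrow> wprod W (drop i xs) \<in> carrier W"
  by (rule wprod_closed, rule lists_drop)

lemma wprod_append [simp]:
  "xs \<in> lists S \<Longrightarrow> ys \<in> lists S \<Longrightarrow> wprod W (xs @ ys) = wprod W xs \<otimes> wprod W ys"
  by (induct xs) (auto simp: m_assoc)

lemma wprod_rev: "xs \<in> lists S \<Longrightarrow> wprod W (rev xs) = inv (wprod W xs)"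
proof (induct xs)
  case (Cons a xs)
  then have "wprod W (rev xs @ [a]) = inv (wprod W xs) \<otimes> a"
    by (subst wprod_append) auto
  then show ?case using Cons by (simp add: inv_mult_group)
qed simp

subsection \<open>The reflection cocycle\<close>

text \<open>For xs = s_1 \<dots> s_k, word_refl xs i is the reflection s_1 \<dots> s_i s_{i+1} s_i \<dots> s_1
  (letters are indexed from 0), and word_eta is Bjorner--Brenti's \<open>\<eta>\<close> written as a parity.
  Its invariance under the Coxeter relations is the one place where the presentation is used.\<close>

definition word_refl :: "'a list \<Rightarrow> nat \<Rightarrow> 'a" where
  "word_refl xs i = wprod W (take i xs) \<otimes> xs ! i \<otimes> inv (wprod W (take i xs))"

definition word_refl_count :: "'a list \<Rightarrow> 'a \<Rightarrow> nat" where
  "word_refl_count xs r = card {i. i < length xs \<and> word_refl xs i = r}"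

definition word_eta :: "'a list \<Rightarrow> 'a \<Rightarrow> bool" where
  "word_eta xs r \<longleftrightarrow> odd (word_refl_count xs r)"

lemma word_refl_closed: "xs \<in> lists S \<Longrightarrow> i < length xs \<Longrightarrow> word_refl xs i \<in> carrier W"
  unfolding word_refl_def using lists_take lists_nth by (metis S_carrier inv_closed m_closed wprod_closed)

lemma word_refl_append_left: "i < length xs \<Longrightarrow> word_refl (xs @ ys) i = word_refl xs i"
  unfolding word_refl_def by (simp add: nth_append)

lemma word_refl_append_right:
  assumes "xs \<in> lists S" "ys \<in> lists S" "j < length ys"
  shows "word_refl (xs @ ys) (length xs + j) = wprod W xs \<otimes> word_refl ys j \<otimes> inv (wprod W xs)"
  using assms unfolding word_refl_def
  by (simp add: lists_take lists_nth inv_mult_group m_assoc)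

lemma conj_eq_iff:
  assumes "p \<in> carrier W" "t \<in> carrier W" "r \<in> carrier W"
  shows "p \<otimes> t \<otimes> inv p = r \<longleftrightarrow> t = inv p \<otimes> r \<otimes> p"
proof -
  have "inv p \<otimes> (p \<otimes> t \<otimes> inv p) \<otimes> p = t" "p \<otimes> (inv p \<otimes> r \<otimes> p) \<otimes> inv p = r"
    using assms by (simp_all add: m_assoc)
  then show ?thesis by auto
qed

lemma word_refl_count_append:
  assumes "xs \<in> lists S" "ys \<in> lists S" "r \<in> carrier W"
  shows "word_refl_count (xs @ ys) r =
    word_refl_count xs r + word_refl_count ys (inv (wprod W xs) \<otimes> r \<otimes> wprod W xs)"
proof -
  let ?p = "wprod W xs"
  let ?A = "{i. i < length xs \<and> word_refl xs i = r}"
  let ?B = "{j. j < length ys \<and> word_refl ys j = inv ?p \<otimes> r \<otimes> ?p}"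
  have right: "word_refl (xs @ ys) (length xs + j) = r \<longleftrightarrow> word_refl ys j = inv ?p \<otimes> r \<otimes> ?p"
    if "j < length ys" for j
    using word_refl_append_right[OF assms(1,2) that] conj_eq_iff word_refl_closed[OF assms(2) that]
      assms by simp
  have "{i. i < length (xs @ ys) \<and> word_refl (xs @ ys) i = r} = ?A \<union> (\<lambda>j. length xs + j) ` ?B"
  proof (intro Set.set_eqI iffI)
    fix i assume i: "i \<in> {i. i < length (xs @ ys) \<and> word_refl (xs @ ys) i = r}"
    show "i \<in> ?A \<union> (\<lambda>j. length xs + j) ` ?B"
    proof (cases "i < length xs")
      case True
      then show ?thesis using i by (simp add: word_refl_append_left)
    next
      case False
      then obtain j where "i = length xs + j" "j < length ys"
        using i by (metis add_diff_inverse_nat add_less_imp_less_left length_append mem_Collect_eq)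
      then show ?thesis using i right by blast
    qed
  next
    fix i assume "i \<in> ?A \<union> (\<lambda>j. length xs + j) ` ?B"
    then show "i \<in> {i. i < length (xs @ ys) \<and> word_refl (xs @ ys) i = r}"
      using right by (auto simp: word_refl_append_left)
  qed
  moreover have "card (?A \<union> (\<lambda>j. length xs + j) ` ?B) = card ?A + card ?B"
    by (subst card_Un_disjoint) (auto simp: card_image inj_on_def)
  ultimately show ?thesis unfolding word_refl_count_def by simp
qed

lemma word_eta_append:
  "xs \<in> lists S \<Longrightarrow> ys \<in> lists S \<Longrightarrow> r \<in> carrier W \<Longrightarrow>
    word_eta (xs @ ys) r \<longleftrightarrow> word_eta xs r \<noteq> word_eta ys (inv (wprod W xs) \<otimes> r \<otimes> wprod W xs)"
  unfolding word_eta_def by (simp add: word_refl_count_append)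

definition alt_word :: "'a \<Rightarrow> 'a \<Rightarrow> nat \<Rightarrow> 'a list" where
  "alt_word s t m = concat (replicate m [s, t])"

lemma alt_word_Suc: "alt_word s t (Suc m) = [s, t] @ alt_word s t m"
  by (simp add: alt_word_def)

lemma alt_word_lists: "s \<in> S \<Longrightarrow> t \<in> S \<Longrightarrow> alt_word s t m \<in> lists S"
  by (induct m) (auto simp: alt_word_def)

lemma length_alt_word: "length (alt_word s t m) = 2 * m"
  by (induct m) (auto simp: alt_word_def)

lemma wprod_alt_word: "s \<in> S \<Longrightarrow> t \<in> S \<Longrightarrow> wprod W (alt_word s t m) = (s \<otimes> t) [^] m"
proof (induct m)
  case (Suc m)
  then show ?case
    using nat_pow_Suc2[of "s \<otimes> t" m] by (simp add: alt_word_Suc alt_word_lists m_assoc del: nat_pow_Suc)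
qed (simp add: alt_word_def)

lemma word_refl_alt_word:
  assumes st: "s \<in> S" "t \<in> S"
  shows "i < 2 * m \<Longrightarrow> word_refl (alt_word s t m) i = (s \<otimes> t) [^] i \<otimes> s"
proof (induct m arbitrary: i)
  case (Suc m)
  let ?c = "s \<otimes> t"
  show ?case
  proof (cases "i < 2")
    case True
    then consider "i = 0" | "i = 1" by linarith
    then show ?thesis
      by cases (auto simp: word_refl_def alt_word_Suc st m_assoc)
  next
    case False
    then obtain j where j: "i = 2 + j" "j < 2 * m"
      using Suc.prems by (metis add_less_imp_less_left le_iff_add not_less mult_Suc_right)
    have "word_refl (alt_word s t (Suc m)) i = ?c \<otimes> (?c [^] j \<otimes> s) \<otimes> inv ?c"
      using word_refl_append_right[of "[s, t]" "alt_word s t m" j] j st Suc.hyps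
      by (simp add: alt_word_Suc alt_word_lists length_alt_word m_assoc)
    also have "\<dots> = ?c \<otimes> ?c [^] j \<otimes> ?c \<otimes> s"
      using st by (simp add: inv_mult_group m_assoc)
    also have "?c \<otimes> ?c [^] j \<otimes> ?c = ?c [^] i"
      using st j by (simp add: nat_pow_Suc2[symmetric] del: nat_pow_Suc)
    finally show ?thesis .
  qed
qed simp

text \<open>In the braid relator (s t)^m the reflections of positions i and m + i coincide.\<close>

lemma word_eta_alt_word:
  assumes st: "s \<in> S" "t \<in> S" and m: "(s \<otimes> t) [^] m = \<one>"
  shows "\<not> word_eta (alt_word s t m) r"
proof -
  let ?f = "\<lambda>i. (s \<otimes> t) [^] i \<otimes> s"
  let ?A = "{i. i < m \<and> ?f i = r}"
  have period: "?f (m + i) = ?f i" for i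
    using st m by (simp add: nat_pow_mult[symmetric] del: nat_pow_Suc)
  have "{i. i < length (alt_word s t m) \<and> word_refl (alt_word s t m) i = r}
      = ?A \<union> (\<lambda>i. m + i) ` ?A"
  proof (intro Set.set_eqI iffI)
    fix i assume "i \<in> {i. i < length (alt_word s t m) \<and> word_refl (alt_word s t m) i = r}"
    then have i: "i < 2 * m" "?f i = r"
      using word_refl_alt_word[OF st] length_alt_word by auto
    show "i \<in> ?A \<union> (\<lambda>i. m + i) ` ?A"
    proof (cases "i < m")
      case False
      then obtain j where "i = m + j" "j < m"
        using i by (metis add_less_imp_less_left le_iff_add mult_2 not_less)
      then show ?thesis using i period by auto
    qed (use i in auto)
  qed (use word_refl_alt_word[OF st] length_alt_word period in auto)
  moreover have "card (?A \<union> (\<lambda>i. m + i) ` ?A) = card ?A + card ?A"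
    by (subst card_Un_disjoint) (auto simp: card_image inj_on_def)
  ultimately show ?thesis unfolding word_eta_def word_refl_count_def by simp
qed

lemma word_eta_Nil [simp]: "\<not> word_eta [] r"
  by (simp add: word_eta_def word_refl_count_def)

lemma coxeter_relator_props:
  assumes "r \<in> coxeter_relators W S"
  shows "r \<in> lists S" "wprod W r = \<one>" "\<not> word_eta r x"
proof -
  from assms consider (square) s where "s \<in> S" "r = [s, s]"
    | (braid) s t m where "s \<in> S" "t \<in> S" "(s \<otimes> t) [^] (m::nat) = \<one>" "r = alt_word s t m"
    unfolding coxeter_relators_def alt_word_def by blast
  then have "r \<in> lists S \<and> wprod W r = \<one> \<and> \<not> word_eta r x"
  proof cases
    case square
    then have "word_refl r i = s" if "i < 2" for i
      using that by (cases i) (auto simp: word_refl_def m_assoc)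
    then have "{i. i < length r \<and> word_refl r i = x} = (if x = s then {0, 1} else {})"
      using square by auto
    then show ?thesis
      using square by (simp add: word_eta_def word_refl_count_def)
  next
    case braid
    then show ?thesis by (simp add: alt_word_lists wprod_alt_word word_eta_alt_word)
  qed
  then show "r \<in> lists S" "wprod W r = \<one>" "\<not> word_eta r x" by auto
qed

lemma word_equiv_word_eta:
  assumes "word_equiv W S xs ys"
  shows "(xs \<in> lists S \<longleftrightarrow> ys \<in> lists S) \<and>
    (xs \<in> lists S \<longrightarrow> (\<forall>x\<in>carrier W. word_eta xs x = word_eta ys x))"
  using assms
proof induct
  case (rel r u v)
  note R = coxeter_relator_props[OF rel]
  show ?case
  proof (intro conjI impI ballI)
    show "u @ r @ v \<in> lists S \<longleftrightarrow> u @ v \<in> lists S" using R by auto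
  next
    fix x assume "u @ r @ v \<in> lists S" and x: "x \<in> carrier W"
    then have l: "u \<in> lists S" "r \<in> lists S" "v \<in> lists S" by auto
    let ?x = "inv (wprod W u) \<otimes> x \<otimes> wprod W u"
    have "word_eta (r @ v) ?x = word_eta v ?x"
      using l x R by (simp add: word_eta_append)
    then show "word_eta (u @ r @ v) x = word_eta (u @ v) x"
      using l x by (simp add: word_eta_append)
  qed
qed auto

lemma word_eta_wprod_eq:
  assumes "xs \<in> lists S" "ys \<in> lists S" "wprod W xs = wprod W ys" "r \<in> carrier W"
  shows "word_eta xs r = word_eta ys r"
proof -
  have l: "rev ys \<in> lists S" using assms by auto
  have "\<not> word_eta (zs @ rev ys) r" if "zs \<in> lists S" "wprod W zs = wprod W ys" for zs
  proof -
    have "word_equiv W S (zs @ rev ys) []"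
      using that l assms(2) S_presentation by (simp add: wprod_rev)
    then have "word_eta (zs @ rev ys) r = word_eta [] r"
      using word_equiv_word_eta that(1) l assms(4) by blast
    then show ?thesis by simp
  qed
  then show ?thesis
    using assms l word_eta_append[OF assms(1) l assms(4)] word_eta_append[OF assms(2) l assms(4)]
    by simp
qed

definition eta :: "'a \<Rightarrow> 'a \<Rightarrow> bool" where
  "eta w r = word_eta (SOME xs. xs \<in> lists S \<and> wprod W xs = w) r"

lemma eta_wprod: "xs \<in> lists S \<Longrightarrow> r \<in> carrier W \<Longrightarrow> eta (wprod W xs) r = word_eta xs r"
  unfolding eta_def by (rule someI2[of _ xs]) (simp, metis in_lists_conv_set word_eta_wprod_eq)

lemma eta_mult:
  assumes "x \<in> carrier W" "y \<in> carrier W" "r \<in> carrier W"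
  shows "eta (x \<otimes> y) r \<longleftrightarrow> eta x r \<noteq> eta y (inv x \<otimes> r \<otimes> x)"
proof -
  obtain xs ys where "xs \<in> lists S" "wprod W xs = x" "ys \<in> lists S" "wprod W ys = y"
    using S_generates assms by metis
  then show ?thesis
    using eta_wprod[of "xs @ ys" r] eta_wprod[of xs r] eta_wprod[of ys "inv x \<otimes> r \<otimes> x"] assms
    by (simp add: word_eta_append)
qed

lemma eta_one [simp]: "r \<in> carrier W \<Longrightarrow> \<not> eta \<one> r"
  using eta_wprod[of "[]" r] by simp

lemma eta_S: "s \<in> S \<Longrightarrow> eta s s"
proof -
  assume s: "s \<in> S"
  have "{i. i < length [s] \<and> word_refl [s] i = s} = {0}" using s by (auto simp: word_refl_def)
  then show ?thesis using eta_wprod[of "[s]" s] s by (simp add: word_eta_def word_refl_count_def)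
qed

lemma eta_witness:
  assumes "xs \<in> lists S" "r \<in> carrier W" "eta (wprod W xs) r"
  obtains i where "i < length xs" "word_refl xs i = r"
proof -
  have "odd (word_refl_count xs r)"
    using assms eta_wprod by (simp add: word_eta_def)
  then have "word_refl_count xs r \<noteq> 0" by presburger
  then show ?thesis using that unfolding word_refl_count_def by (metis (mono_tags) Collect_empty_eq card.empty)
qed

lemma reflections_iff: "r \<in> T \<longleftrightarrow> (\<exists>g s. r = g \<otimes> s \<otimes> inv g \<and> g \<in> carrier W \<and> s \<in> S)"
  unfolding reflections_def by blast

lemma reflection_closed [simp]: "r \<in> T \<Longrightarrow> r \<in> carrier W"
  unfolding reflections_iff by auto

lemma reflection_square [simp]: "r \<in> T \<Longrightarrow> r \<otimes> r = \<one>"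
proof -
  assume "r \<in> T"
  then obtain g s where r: "r = g \<otimes> s \<otimes> inv g" "g \<in> carrier W" "s \<in> S"
    unfolding reflections_iff by auto
  then have "r \<otimes> r = g \<otimes> (s \<otimes> s) \<otimes> inv g" by (simp add: m_assoc)
  then show ?thesis using r by simp
qed

lemma reflection_inv [simp]: "r \<in> T \<Longrightarrow> inv r = r"
  by (simp add: inv_equality)

lemma reflection_conj: "r \<in> T \<Longrightarrow> g \<in> carrier W \<Longrightarrow> g \<otimes> r \<otimes> inv g \<in> T"
proof -
  assume "r \<in> T" and g: "g \<in> carrier W"
  then obtain h s where r: "r = h \<otimes> s \<otimes> inv h" "h \<in> carrier W" "s \<in> S"
    unfolding reflections_iff by auto
  then have "g \<otimes> r \<otimes> inv g = (g \<otimes> h) \<otimes> s \<otimes> inv (g \<otimes> h)"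
    using g by (simp add: m_assoc inv_mult_group)
  then show ?thesis using r g unfolding reflections_iff by blast
qed

lemma S_reflection: "s \<in> S \<Longrightarrow> s \<in> T"
  unfolding reflections_iff by (rule exI[of _ \<one>], rule exI[of _ s]) simp

lemma word_refl_reflection: "xs \<in> lists S \<Longrightarrow> i < length xs \<Longrightarrow> word_refl xs i \<in> T"
  unfolding word_refl_def reflections_iff
  by (rule exI[of _ "wprod W (take i xs)"], rule exI[of _ "xs ! i"]) auto

lemma eta_reflection_self: "r \<in> T \<Longrightarrow> eta r r"
proof -
  assume "r \<in> T"
  then obtain g s where r: "r = g \<otimes> s \<otimes> inv g" "g \<in> carrier W" "s \<in> S"
    unfolding reflections_iff by auto
  then have rc: "r \<in> carrier W" and conj: "inv g \<otimes> r \<otimes> g = s" by (simp_all add: m_assoc)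
  have "\<not> eta (g \<otimes> inv g) r" using rc r by simp
  then have inv_g: "eta (inv g) s = eta g r" using eta_mult[OF r(2) _ rc, of "inv g"] conj r by simp
  have "eta (s \<otimes> inv g) s \<longleftrightarrow> \<not> eta (inv g) s"
    using eta_mult[of s "inv g" s] eta_S r by (simp add: m_assoc)
  moreover have "r = g \<otimes> (s \<otimes> inv g)" using r by (simp add: m_assoc)
  ultimately show ?thesis
    using eta_mult[OF r(2) _ rc, of "s \<otimes> inv g"] conj inv_g r by simp
qed

lemma word_refl_mult_wprod:
  assumes "xs \<in> lists S" "i < length xs"
  shows "word_refl xs i \<otimes> wprod W xs = wprod W (del_nth i xs)"
proof -
  let ?p = "wprod W (take i xs)" and ?x = "xs ! i" and ?q = "wprod W (drop (Suc i) xs)"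
  have c: "?p \<in> carrier W" "?x \<in> S" "?q \<in> carrier W" using assms by auto
  have "wprod W xs = wprod W (take i xs @ [?x] @ drop (Suc i) xs)"
    using assms by (simp add: id_take_nth_drop[symmetric])
  also have "\<dots> = ?p \<otimes> (?x \<otimes> ?q)"
    using assms c by (subst wprod_append) (auto dest: in_set_takeD in_set_dropD)
  finally have "word_refl xs i \<otimes> wprod W xs = ?p \<otimes> ((?x \<otimes> ?x) \<otimes> ?q)"
    unfolding word_refl_def using c by (simp add: m_assoc)
  also have "\<dots> = wprod W (del_nth i xs)"
    using assms c unfolding del_nth_def
    by (subst wprod_append) (auto dest: in_set_takeD in_set_dropD)
  finally show ?thesis .
qed

subsection \<open>Length and the exchange condition\<close>

lemma len_wprod_le: "xs \<in> lists S \<Longrightarrow> len (wprod W xs) \<le> length xs"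
  unfolding cox_length_def by (rule Least_le) auto

lemma reduced_word_exists: "x \<in> carrier W \<Longrightarrow> \<exists>xs. reduced_word W S xs x"
proof -
  assume "x \<in> carrier W"
  then have "\<exists>n. \<exists>xs\<in>lists S. length xs = n \<and> wprod W xs = x" using S_generates by blast
  then have "\<exists>xs\<in>lists S. length xs = len x \<and> wprod W xs = x"
    unfolding cox_length_def by (rule LeastI_ex)
  then show ?thesis unfolding reduced_word_def by auto
qed

lemma reduced_word_iff:
  "reduced_word W S xs x \<longleftrightarrow> xs \<in> lists S \<and> wprod W xs = x \<and> length xs \<le> len x"
  unfolding reduced_word_def using len_wprod_le by fastforce

lemma len_one [simp]: "len \<one> = 0"
  using len_wprod_le[of "[]"] by simp

lemma len_eq_0_iff: "x \<in> carrier W \<Longrightarrow> len x = 0 \<longleftrightarrow> x = \<one>"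
  using reduced_word_exists unfolding reduced_word_def by fastforce

lemma len_mult_le: "x \<in> carrier W \<Longrightarrow> y \<in> carrier W \<Longrightarrow> len (x \<otimes> y) \<le> len x + len y"
proof -
  assume "x \<in> carrier W" "y \<in> carrier W"
  then obtain xs ys where "reduced_word W S xs x" "reduced_word W S ys y"
    using reduced_word_exists by blast
  then show ?thesis
    using len_wprod_le[of "xs @ ys"] unfolding reduced_word_def by auto
qed

lemma len_S: "s \<in> S \<Longrightarrow> len s = 1"
  using len_wprod_le[of "[s]"] len_eq_0_iff[of s] one_notin_S by fastforce

lemma len_mult_S_le: "x \<in> carrier W \<Longrightarrow> s \<in> S \<Longrightarrow> len (x \<otimes> s) \<le> len x + 1"
  using len_mult_le[of x s] len_S by simp

lemma len_le_mult_S: "x \<in> carrier W \<Longrightarrow> s \<in> S \<Longrightarrow> len x \<le> len (x \<otimes> s) + 1"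
  using len_mult_S_le[of "x \<otimes> s" s] by (simp add: m_assoc)

lemma len_le_S_mult: "x \<in> carrier W \<Longrightarrow> s \<in> S \<Longrightarrow> len x \<le> len (s \<otimes> x) + 1"
  using len_mult_le[of s "s \<otimes> x"] len_S by (simp add: m_assoc[symmetric])

lemma len_reflection_mult_less_if_eta:
  assumes "r \<in> T" "w \<in> carrier W" "eta w r"
  shows "len (r \<otimes> w) < len w"
proof -
  obtain xs where xs: "reduced_word W S xs w" using reduced_word_exists assms by blast
  then have l: "xs \<in> lists S" "wprod W xs = w" "length xs = len w" unfolding reduced_word_def by auto
  obtain i where i: "i < length xs" "word_refl xs i = r"
    by (rule eta_witness[of xs r]) (use l assms in auto)
  have "len (r \<otimes> w) \<le> length (del_nth i xs)"
    using word_refl_mult_wprod[OF l(1) i(1)] i l len_wprod_le[OF lists_del_nth[OF l(1)]] by auto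
  then show ?thesis using length_del_nth[OF i(1)] i l by linarith
qed

lemma len_reflection_mult_less_iff:
  assumes "r \<in> T" "w \<in> carrier W"
  shows "len (r \<otimes> w) < len w \<longleftrightarrow> eta w r"
proof
  assume "len (r \<otimes> w) < len w"
  moreover have "eta (r \<otimes> w) r \<longleftrightarrow> \<not> eta w r"
    using eta_mult[of r w r] eta_reflection_self assms by (simp add: m_assoc)
  moreover have "r \<otimes> (r \<otimes> w) = w" using assms by (simp add: m_assoc[symmetric])
  ultimately show "eta w r"
    using len_reflection_mult_less_if_eta[of r "r \<otimes> w"] assms by fastforce
qed (use len_reflection_mult_less_if_eta assms in blast)

lemma len_reflection_mult_neq:
  assumes "r \<in> T" "w \<in> carrier W"
  shows "len (r \<otimes> w) \<noteq> len w"
proof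
  assume eq: "len (r \<otimes> w) = len w"
  have "r \<otimes> (r \<otimes> w) = w" using assms by (simp add: m_assoc[symmetric])
  then have "eta (r \<otimes> w) r \<longleftrightarrow> eta w r"
    using len_reflection_mult_less_iff[of r "r \<otimes> w"] len_reflection_mult_less_iff[of r w] assms eq
    by simp
  moreover have "eta (r \<otimes> w) r \<longleftrightarrow> \<not> eta w r"
    using eta_mult[of r w r] eta_reflection_self assms by (simp add: m_assoc)
  ultimately show False by simp
qed

lemma mult_reflection_conj: "r \<in> T \<Longrightarrow> w \<in> carrier W \<Longrightarrow> w \<otimes> r = (w \<otimes> r \<otimes> inv w) \<otimes> w"
  by (simp add: m_assoc)

lemma len_mult_reflection_neq: "r \<in> T \<Longrightarrow> w \<in> carrier W \<Longrightarrow> len (w \<otimes> r) \<noteq> len w"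
  using len_reflection_mult_neq[of "w \<otimes> r \<otimes> inv w" w] mult_reflection_conj reflection_conj
  by simp

lemma len_mult_S_cases:
  assumes "x \<in> carrier W" "s \<in> S"
  shows "len (x \<otimes> s) = len x + 1 \<or> len x = len (x \<otimes> s) + 1"
  using len_mult_S_le[OF assms] len_le_mult_S[OF assms]
    len_mult_reflection_neq[OF S_reflection[OF assms(2)] assms(1)] by linarith

lemma exchange_left:
  assumes "xs \<in> lists S" "r \<in> T" "len (r \<otimes> wprod W xs) < len (wprod W xs)"
  obtains i where "i < length xs" "word_refl xs i = r" "r \<otimes> wprod W xs = wprod W (del_nth i xs)"
proof -
  have "eta (wprod W xs) r" using len_reflection_mult_less_iff assms by simp
  then show ?thesis using that eta_witness word_refl_mult_wprod assms by (metis reflection_closed)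
qed

lemma exchange_right:
  assumes "xs \<in> lists S" "r \<in> T" "len (wprod W xs \<otimes> r) < len (wprod W xs)"
  obtains i where "i < length xs" "wprod W xs \<otimes> r = wprod W (del_nth i xs)"
proof -
  let ?w = "wprod W xs"
  have "?w \<otimes> r \<otimes> inv ?w \<in> T" using reflection_conj assms by simp
  moreover have "?w \<otimes> r = (?w \<otimes> r \<otimes> inv ?w) \<otimes> ?w" using mult_reflection_conj assms by simp
  ultimately show ?thesis using exchange_left[OF assms(1)] assms that by metis
qed

lemma exchange_right_append:
  assumes "xs \<in> lists S" "ys \<in> lists S" "r \<in> T"
    and "len (wprod W (xs @ ys) \<otimes> r) < len (wprod W (xs @ ys))"
  shows "(\<exists>i<length xs. wprod W (xs @ ys) \<otimes> r = wprod W (del_nth i xs) \<otimes> wprod W ys) \<or>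
         (\<exists>j<length ys. wprod W (xs @ ys) \<otimes> r = wprod W xs \<otimes> wprod W (del_nth j ys))"
proof -
  obtain i where i: "i < length (xs @ ys)" "wprod W (xs @ ys) \<otimes> r = wprod W (del_nth i (xs @ ys))"
    using exchange_right[of "xs @ ys" r] assms by auto
  show ?thesis
  proof (cases "i < length xs")
    case True
    then show ?thesis using i assms lists_del_nth[OF assms(1)] by (auto simp: del_nth_append)
  next
    case False
    then show ?thesis using i assms lists_del_nth[OF assms(2)]
      by (intro disjI2 exI[of _ "i - length xs"]) (auto simp: del_nth_append)
  qed
qed

lemma deletion:
  "xs \<in> lists S \<Longrightarrow> \<exists>zs. subseq zs xs \<and> reduced_word W S zs (wprod W xs)"
proof (induct xs rule: rev_induct)
  case Nil
  then show ?case by (auto simp: reduced_word_def)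
next
  case (snoc y xs)
  then have l: "xs \<in> lists S" "y \<in> S" by auto
  then obtain zs where zs: "subseq zs xs" "reduced_word W S zs (wprod W xs)" using snoc by blast
  let ?z = "wprod W xs"
  have zl: "zs \<in> lists S" "wprod W zs = ?z" "length zs = len ?z"
    using zs(2) unfolding reduced_word_def by auto
  have w: "wprod W (xs @ [y]) = ?z \<otimes> y" using l by simp
  from len_mult_S_cases[OF wprod_closed[OF l(1)] l(2)] show ?case
  proof
    assume "len (?z \<otimes> y) = len ?z + 1"
    then have "reduced_word W S (zs @ [y]) (wprod W (xs @ [y]))"
      unfolding reduced_word_iff using zl l w by auto
    moreover have "subseq (zs @ [y]) (xs @ [y])" using zs(1) by simp
    ultimately show ?thesis by blast
  next
    assume shorter: "len ?z = len (?z \<otimes> y) + 1"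
    then obtain i where i: "i < length zs" "?z \<otimes> y = wprod W (del_nth i zs)"
      using exchange_right[OF zl(1) S_reflection[OF l(2)]] zl by (metis less_add_one)
    then have "reduced_word W S (del_nth i zs) (wprod W (xs @ [y]))"
      unfolding reduced_word_iff using w shorter zl length_del_nth[OF i(1)] lists_del_nth[OF zl(1)]
      by auto
    moreover have "subseq (del_nth i zs) (xs @ [y])"
      using subseq_order.trans[OF subseq_del_nth zs(1)] by (rule subseq_rev_drop_many)
    ultimately show ?thesis by blast
  qed
qed

subsection \<open>Standard parabolic subgroups\<close>

lemma parabolic_wprod: "xs \<in> lists K \<Longrightarrow> wprod W xs \<in> parabolic W K"
  unfolding parabolic_def by blast

lemma parabolicE:
  assumes "x \<in> parabolic W K"
  obtains xs where "xs \<in> lists K" "x = wprod W xs"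
  using assms unfolding parabolic_def by blast

lemma parabolic_closed: "K \<subseteq> S \<Longrightarrow> x \<in> parabolic W K \<Longrightarrow> x \<in> carrier W"
  by (erule parabolicE) (metis lists_mono subsetD wprod_closed)

lemma parabolic_one [simp]: "\<one> \<in> parabolic W K"
  using parabolic_wprod[of "[]" K] by simp

lemma parabolic_generator: "K \<subseteq> S \<Longrightarrow> s \<in> K \<Longrightarrow> s \<in> parabolic W K"
  using parabolic_wprod[of "[s]" K] by auto

lemma parabolic_mono: "K \<subseteq> L \<Longrightarrow> x \<in> parabolic W K \<Longrightarrow> x \<in> parabolic W L"
  by (erule parabolicE) (metis lists_mono subsetD parabolic_wprod)

lemma parabolic_mult:
  assumes "K \<subseteq> S" "x \<in> parabolic W K" "y \<in> parabolic W K"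
  shows "x \<otimes> y \<in> parabolic W K"
proof -
  obtain xs ys where "xs \<in> lists K" "x = wprod W xs" "ys \<in> lists K" "y = wprod W ys"
    using assms(2,3) by (metis parabolicE)
  moreover have "xs \<in> lists S" "ys \<in> lists S" using calculation assms(1) by auto
  ultimately show ?thesis using parabolic_wprod[of "xs @ ys" K] by simp
qed

lemma parabolic_inv:
  assumes "K \<subseteq> S" "x \<in> parabolic W K"
  shows "inv x \<in> parabolic W K"
proof -
  obtain xs where xs: "xs \<in> lists K" "x = wprod W xs" using assms(2) by (rule parabolicE)
  moreover have "xs \<in> lists S" using xs(1) assms(1) by auto
  ultimately have "inv x = wprod W (rev xs)" by (simp add: wprod_rev)
  moreover have "rev xs \<in> lists K" using xs(1) by (simp add: in_lists_conv_set)
  ultimately show ?thesis using parabolic_wprod by simp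
qed

lemma word_refl_parabolic:
  assumes "xs \<in> lists S" "i < length xs"
  shows "word_refl xs i \<in> parabolic W (set xs)"
proof -
  let ?p = "take i xs"
  have p: "?p \<in> lists S" using assms(1) by (rule lists_take)
  moreover have "rev ?p \<in> lists S" using p by (simp add: in_lists_conv_set)
  moreover have "xs ! i \<in> S" using assms by (rule lists_nth)
  ultimately have "word_refl xs i = wprod W (?p @ [xs ! i] @ rev ?p)"
    unfolding word_refl_def by (simp add: wprod_rev m_assoc)
  moreover have "?p @ [xs ! i] @ rev ?p \<in> lists (set xs)"
    using set_take_subset[of i xs] nth_mem[OF assms(2)] by auto
  ultimately show ?thesis using parabolic_wprod by simp
qed

lemma parabolic_reduced_word:
  assumes "K \<subseteq> S" "x \<in> parabolic W K"
  obtains xs where "xs \<in> lists K" "reduced_word W S xs x"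
proof -
  obtain ks where ks: "ks \<in> lists K" "x = wprod W ks" using assms(2) by (rule parabolicE)
  moreover have "ks \<in> lists S" using ks(1) assms(1) by auto
  ultimately obtain zs where "subseq zs ks" "reduced_word W S zs x"
    using deletion by blast
  then show ?thesis using that lists_subseq ks(1) by blast
qed

lemma generator_in_parabolic: "K \<subseteq> S \<Longrightarrow> y \<in> S \<Longrightarrow> y \<in> parabolic W K \<Longrightarrow> y \<in> K"
proof -
  assume K: "K \<subseteq> S" and y: "y \<in> S" "y \<in> parabolic W K"
  then obtain ks where ks: "ks \<in> lists K" "reduced_word W S ks y" by (metis parabolic_reduced_word)
  then have "length ks = 1" using len_S[OF y(1)] unfolding reduced_word_def by simp
  then obtain k where "ks = [k]" by (metis One_nat_def length_0_conv length_Suc_conv)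
  then show ?thesis using ks K unfolding reduced_word_def by auto
qed

text \<open>The leading letter of a reduced word is a left descent, so by the exchange condition
  applied to a K-word it is a reflection of W_K, hence in K.\<close>

lemma reduced_word_parabolic_letters:
  assumes "K \<subseteq> S"
  shows "reduced_word W S xs x \<Longrightarrow> x \<in> parabolic W K \<Longrightarrow> set xs \<subseteq> K"
proof (induct xs arbitrary: x)
  case (Cons y ys)
  have y: "y \<in> S" "ys \<in> lists S" "x = y \<otimes> wprod W ys" "len x = length ys + 1"
    using Cons.prems(1) unfolding reduced_word_def by auto
  have xc: "x \<in> carrier W" using y by simp
  have yx: "y \<otimes> x = wprod W ys" using y by simp
  then have shorter: "len (y \<otimes> x) < len x" using len_wprod_le[OF y(2)] y(4) by simp
  obtain ks where ks: "ks \<in> lists K" "reduced_word W S ks x"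
    using parabolic_reduced_word[OF assms Cons.prems(2)] by blast
  have ksS: "ks \<in> lists S" using ks(1) assms by auto
  then have "wprod W ks = x" using ks(2) unfolding reduced_word_def by simp
  then obtain i where "i < length ks" "word_refl ks i = y"
    using exchange_left[OF ksS S_reflection[OF y(1)]] shorter by metis
  then have "y \<in> parabolic W K"
    using word_refl_parabolic[OF ksS] parabolic_mono ks(1) by (metis in_lists_conv_set subsetI)
  then have yK: "y \<in> K" using generator_in_parabolic assms y(1) by blast
  have "reduced_word W S ys (y \<otimes> x)"
    unfolding reduced_word_iff using yx y len_le_S_mult[OF xc y(1)] by simp
  moreover have "y \<otimes> x \<in> parabolic W K"
    using parabolic_mult[OF assms parabolic_generator[OF assms yK] Cons.prems(2)] .
  ultimately show ?case using Cons.hyps yK by simp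
qed simp

lemma parabolic_inter:
  assumes "K \<subseteq> S" "L \<subseteq> S"
  shows "parabolic W K \<inter> parabolic W L = parabolic W (K \<inter> L)"
proof (intro equalityI subsetI)
  fix x assume "x \<in> parabolic W K \<inter> parabolic W L"
  then have xK: "x \<in> parabolic W K" and xL: "x \<in> parabolic W L" by simp_all
  obtain xs where xs: "xs \<in> lists K" "reduced_word W S xs x"
    by (rule parabolic_reduced_word[OF assms(1) xK])
  have "set xs \<subseteq> L" by (rule reduced_word_parabolic_letters[OF assms(2) xs(2) xL])
  then have "xs \<in> lists (K \<inter> L)" using xs(1) by (auto simp: in_lists_conv_set)
  then show "x \<in> parabolic W (K \<inter> L)"
    using parabolic_wprod xs(2) unfolding reduced_word_def by blast
qed (use parabolic_mono[of "K \<inter> L" K] parabolic_mono[of "K \<inter> L" L] in blast)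

lemma parabolic_singleton: "s \<in> S \<Longrightarrow> parabolic W {s} = {\<one>, s}"
proof (intro equalityI subsetI)
  fix x assume s: "s \<in> S" and x: "x \<in> parabolic W {s}"
  from x obtain xs where "xs \<in> lists {s}" "x = wprod W xs" by (rule parabolicE)
  moreover have "xs \<in> lists {s} \<Longrightarrow> wprod W xs \<in> {\<one>, s}" for xs
    using s by (induct xs) auto
  ultimately show "x \<in> {\<one>, s}" by simp
qed (auto intro: parabolic_generator)

lemma parabolic_singleton_commute: "s \<in> S \<Longrightarrow> x \<in> parabolic W {s} \<Longrightarrow> x \<otimes> s = s \<otimes> x"
  using parabolic_singleton by auto

text \<open>The reflection a b occurs among the reflections of the concatenation of a K-word for a
  and an L-word for b.\<close>

lemma reflection_mult_parabolic:
  assumes K: "K \<subseteq> S" and L: "L \<subseteq> S"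
    and a: "a \<in> parabolic W K" and b: "b \<in> parabolic W L" and t: "a \<otimes> b \<in> T"
  shows "a \<in> parabolic W (K \<inter> L) \<or> b \<in> parabolic W (K \<inter> L)"
proof -
  obtain as bs where as: "as \<in> lists K" "a = wprod W as" and bs: "bs \<in> lists L" "b = wprod W bs"
    using a b by (metis parabolicE)
  have S: "as \<in> lists S" "bs \<in> lists S" using as bs K L by auto
  have ab: "wprod W (as @ bs) = a \<otimes> b" using S as bs by simp
  have c: "a \<in> carrier W" "b \<in> carrier W" using S as bs by simp_all
  have asbs: "as @ bs \<in> lists S" using S by simp
  have "len ((a \<otimes> b) \<otimes> wprod W (as @ bs)) < len (wprod W (as @ bs))"
    using t len_reflection_mult_neq[OF t one_closed] ab by simp
  then obtain i where i: "i < length (as @ bs)" "word_refl (as @ bs) i = a \<otimes> b"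
    using exchange_left[OF asbs t] by blast
  show ?thesis
  proof (cases "i < length as")
    case True
    then have "a \<otimes> b \<in> parabolic W K"
      using i word_refl_parabolic[OF S(1) True] word_refl_append_left[OF True] as(1)
      by (metis in_lists_conv_set parabolic_mono subsetI)
    then have "b \<in> parabolic W K"
      using parabolic_mult[OF K parabolic_inv[OF K a]] c by fastforce
    then show ?thesis using b parabolic_inter K L by blast
  next
    case False
    define j where "j = i - length as"
    have j: "j < length bs" "i = length as + j" using False i(1) unfolding j_def by auto
    let ?r = "word_refl bs j"
    have "set bs \<subseteq> L" using bs(1) by (simp add: in_lists_conv_set subsetI)
    then have r: "?r \<in> parabolic W L" "?r \<in> T"
      using parabolic_mono word_refl_parabolic[OF S(2) j(1)] word_refl_reflection[OF S(2) j(1)]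
      by blast+
    have "a \<otimes> b = a \<otimes> (?r \<otimes> inv a)"
      using i word_refl_append_right[OF S j(1)] as j c r by (simp add: m_assoc)
    then have "b = ?r \<otimes> inv a" using c r by simp
    then have "?r \<otimes> b = inv a" using c r by (simp add: m_assoc[symmetric])
    then have "inv a \<in> parabolic W L" using parabolic_mult[OF L r(1) b] by simp
    then have "a \<in> parabolic W L" using parabolic_inv[OF L] c by fastforce
    then show ?thesis using a parabolic_inter K L by blast
  qed
qed

subsection \<open>Bruhat order and the subword property\<close>

lemma bruhat_le_refl: "x \<in> carrier W \<Longrightarrow> bruhat_le W S x x"
  unfolding bruhat_le_def by simp

lemma bruhat_le_trans: "bruhat_le W S x y \<Longrightarrow> bruhat_le W S y z \<Longrightarrow> bruhat_le W S x z"
  unfolding bruhat_le_def by (meson rtranclp_trans)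

lemma bruhat_le_reflection:
  "x \<in> carrier W \<Longrightarrow> t \<in> T \<Longrightarrow> len x < len (x \<otimes> t) \<Longrightarrow> bruhat_le W S x (x \<otimes> t)"
  unfolding bruhat_le_def bruhat_step_def by (intro conjI r_into_rtranclp) auto

lemma bruhat_le_closed: "bruhat_le W S x y \<Longrightarrow> x \<in> carrier W \<and> y \<in> carrier W"
  unfolding bruhat_le_def by simp

lemma bruhat_le_subword:
  assumes "bruhat_le W S x w" "reduced_word W S ws w"
  shows "\<exists>ys. subseq ys ws \<and> wprod W ys = x"
proof -
  have ws: "ws \<in> lists S" "wprod W ws = w" using assms(2) unfolding reduced_word_def by auto
  have "(bruhat_step W S)\<^sup>*\<^sup>* x w" using assms(1) unfolding bruhat_le_def by simp
  then show ?thesis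
  proof (induct rule: converse_rtranclp_induct)
    case base
    then show ?case using ws by auto
  next
    case (step x y)
    then obtain ys where ys: "subseq ys ws" "wprod W ys = y" by blast
    then obtain zs where zs: "subseq zs ys" "reduced_word W S zs y"
      using deletion[OF lists_subseq[OF ys(1) ws(1)]] by blast
    have zl: "zs \<in> lists S" "wprod W zs = y" using zs(2) unfolding reduced_word_def by auto
    obtain t where t: "x \<in> carrier W" "t \<in> T" "y = x \<otimes> t" "len x < len y"
      using step(1) unfolding bruhat_step_def by auto
    then have yt: "y \<otimes> t = x" by (simp add: m_assoc)
    then obtain i where i: "wprod W zs \<otimes> t = wprod W (del_nth i zs)"
      using exchange_right[OF zl(1) t(2)] zl t by metis
    have "subseq (del_nth i zs) ws"
      using subseq_del_nth zs(1) ys(1) by (meson subseq_order.order_trans)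
    moreover have "wprod W (del_nth i zs) = x" using i zl yt by simp
    ultimately show ?case by blast
  qed
qed

text \<open>The one configuration of the lifting step below that is not settled by lengths alone.\<close>

lemma mult_S_eq_mult_reflection:
  assumes a: "a \<in> carrier W" and t: "t \<in> T" and s: "s \<in> S"
    and at: "len a < len (a \<otimes> t)" and as: "len a < len (a \<otimes> s)"
    and ats: "len (a \<otimes> t \<otimes> s) < len (a \<otimes> s)"
  shows "a \<otimes> s = a \<otimes> t"
proof -
  let ?c = "a \<otimes> t"
  have c: "?c \<in> carrier W" using a t by simp
  have "len (a \<otimes> s) = len a + 1" using len_mult_S_cases[OF a s] as by auto
  moreover have "len ?c = len (?c \<otimes> s) + 1" using len_mult_S_cases[OF c s] at ats calculation by auto
  ultimately have lens: "len ?c = len a + 1" "len (?c \<otimes> s) = len a" using at ats by linarith+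
  have "?c \<otimes> s \<in> carrier W" using c s by simp
  then obtain zs where zs: "reduced_word W S zs (?c \<otimes> s)" using reduced_word_exists by blast
  then have zl: "zs \<in> lists S" "wprod W zs = ?c \<otimes> s" "length zs = len a"
    using lens unfolding reduced_word_def by auto
  have zsc: "wprod W (zs @ [s]) = ?c" using zl s c by (simp add: m_assoc)
  have ct: "?c \<otimes> t = a" using a t by (simp add: m_assoc)
  have "len (wprod W (zs @ [s]) \<otimes> t) < len (wprod W (zs @ [s]))" unfolding zsc ct using at .
  from exchange_right_append[OF zl(1) _ t this, unfolded zsc ct] s zl(1)
  consider (left) i where "i < length zs" "a = wprod W (del_nth i zs) \<otimes> s"
    | (right) "a = wprod W zs"
    by (auto simp: del_nth_def[of 0])
  then show ?thesis
  proof cases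
    case left
    then have "a \<otimes> s = wprod W (del_nth i zs)"
      using s lists_del_nth[OF zl(1)] by (simp add: m_assoc)
    moreover have "len (wprod W (del_nth i zs)) \<le> length (del_nth i zs)"
      by (rule len_wprod_le) (use zl(1) in auto)
    ultimately have "len (a \<otimes> s) \<le> len a - 1" using length_del_nth[OF left(1)] zl(3) by simp
    then show ?thesis using as by simp
  next
    case right
    then have "a \<otimes> s = wprod W zs \<otimes> s" by simp
    also have "\<dots> = ?c" using zl(2) c s by (simp add: m_assoc)
    finally show ?thesis .
  qed
qed

lemma bruhat_le_lifting_step:
  assumes a: "a \<in> carrier W" and t: "t \<in> T" and at: "len a < len (a \<otimes> t)" and s: "s \<in> S"
  shows "bruhat_le W S (a \<otimes> s) (a \<otimes> t) \<or> bruhat_le W S (a \<otimes> s) (a \<otimes> t \<otimes> s)"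
proof -
  have c: "a \<otimes> t \<in> carrier W" "a \<otimes> s \<in> carrier W" using a t s by simp_all
  have a_at: "bruhat_le W S a (a \<otimes> t)" using bruhat_le_reflection a t at by simp
  have sts: "s \<otimes> t \<otimes> s \<in> T" using reflection_conj[OF t, of s] s by simp
  have ats: "a \<otimes> s \<otimes> (s \<otimes> t \<otimes> s) = a \<otimes> t \<otimes> s" using a t s by (simp add: m_assoc)
  then have "len (a \<otimes> t \<otimes> s) \<noteq> len (a \<otimes> s)" using len_mult_reflection_neq[OF sts c(2)] by simp
  then consider "len (a \<otimes> s) < len a"
    | "len a < len (a \<otimes> s)" "len (a \<otimes> s) < len (a \<otimes> t \<otimes> s)"
    | "len a < len (a \<otimes> s)" "len (a \<otimes> t \<otimes> s) < len (a \<otimes> s)"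
    using len_mult_S_cases[OF a s] by linarith
  then show ?thesis
  proof cases
    case 1
    then have "bruhat_le W S (a \<otimes> s) a"
      using bruhat_le_reflection[OF c(2) S_reflection[OF s]] a s by (simp add: m_assoc)
    then show ?thesis using a_at bruhat_le_trans by blast
  next
    case 2
    then show ?thesis using bruhat_le_reflection[OF c(2) sts] ats by simp
  next
    case 3
    then show ?thesis using mult_S_eq_mult_reflection[OF a t s at] bruhat_le_refl c by simp
  qed
qed

lemma bruhat_le_mult_S:
  assumes "bruhat_le W S a b" "s \<in> S"
  shows "bruhat_le W S (a \<otimes> s) b \<or> bruhat_le W S (a \<otimes> s) (b \<otimes> s)"
proof -
  have bc: "b \<in> carrier W" using assms bruhat_le_closed by blast
  have "(bruhat_step W S)\<^sup>*\<^sup>* a b" using assms(1) unfolding bruhat_le_def by simp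
  then show ?thesis
  proof (induct rule: converse_rtranclp_induct)
    case base
    then show ?case using bruhat_le_refl bc assms by simp
  next
    case (step a c)
    then obtain t where t: "a \<in> carrier W" "t \<in> T" "c = a \<otimes> t" "len a < len c"
      unfolding bruhat_step_def by auto
    have "bruhat_le W S c b" using step(2) bc t unfolding bruhat_le_def by simp
    then show ?case
      using bruhat_le_lifting_step[OF t(1,2) _ assms(2)] t step(3) bruhat_le_trans by metis
  qed
qed

lemma reduced_word_snocD:
  assumes "reduced_word W S (xs @ [x]) w"
  shows "xs \<in> lists S" "x \<in> S" "wprod W xs \<otimes> x = w" "length xs + 1 = len w"
proof -
  show l: "xs \<in> lists S" "x \<in> S" using assms unfolding reduced_word_def by auto
  then have "wprod W (xs @ [x]) = wprod W xs \<otimes> x" using wprod_append[of xs "[x]"] by simp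
  then show "wprod W xs \<otimes> x = w" "length xs + 1 = len w"
    using assms unfolding reduced_word_def by auto
qed

lemma reduced_word_butlast:
  assumes "reduced_word W S (xs @ [x]) w"
  shows "reduced_word W S xs (wprod W xs)"
  using reduced_word_snocD[OF assms] len_mult_S_le[of "wprod W xs" x]
  unfolding reduced_word_iff by simp

lemma subword_bruhat_le:
  "reduced_word W S ws w \<Longrightarrow> subseq ys ws \<Longrightarrow> bruhat_le W S (wprod W ys) w"
proof (induct ws arbitrary: ys w rule: rev_induct)
  case Nil
  then have "ys = []" "w = \<one>" unfolding reduced_word_def by auto
  then show ?case using bruhat_le_refl by simp
next
  case (snoc x ws)
  note l = reduced_word_snocD[OF snoc(2)]
  let ?v = "wprod W ws"
  have r: "reduced_word W S ws ?v" using reduced_word_butlast[OF snoc(2)] .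
  then have "len ?v < len (?v \<otimes> x)" using l unfolding reduced_word_def by simp
  then have vw: "bruhat_le W S ?v w"
    using bruhat_le_reflection[OF wprod_closed[OF l(1)] S_reflection[OF l(2)]] l by simp
  from subseq_snoc_cases[OF snoc(3)] show ?case
  proof
    assume "subseq ys ws"
    then show ?thesis using snoc(1)[OF r] vw bruhat_le_trans by blast
  next
    assume "\<exists>ys'. ys = ys' @ [x] \<and> subseq ys' ws"
    then obtain ys' where ys': "ys = ys' @ [x]" "subseq ys' ws" by blast
    have "ys' \<in> lists S" using lists_subseq[OF ys'(2) l(1)] .
    then have "wprod W ys = wprod W ys' \<otimes> x" using ys' l by simp
    then show ?thesis
      using bruhat_le_mult_S[OF snoc(1)[OF r ys'(2)] l(2)] vw l bruhat_le_trans by auto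
  qed
qed

lemma one_bruhat_le: "x \<in> carrier W \<Longrightarrow> bruhat_le W S \<one> x"
  using reduced_word_exists subword_bruhat_le[of _ x "[]"] by fastforce

lemma bruhat_edge_iff:
  "x \<in> carrier W \<Longrightarrow> y \<in> carrier W \<Longrightarrow> bruhat_edge W S x y \<longleftrightarrow> inv x \<otimes> y \<in> T"
proof
  assume "x \<in> carrier W" "bruhat_edge W S x y"
  then show "inv x \<otimes> y \<in> T" unfolding bruhat_edge_def by auto
next
  assume "x \<in> carrier W" "y \<in> carrier W" "inv x \<otimes> y \<in> T"
  moreover have "y = x \<otimes> (inv x \<otimes> y)" using calculation by simp
  ultimately show "bruhat_edge W S x y" unfolding bruhat_edge_def by blast
qed

subsection \<open>Minimal coset representatives\<close>

lemma len_wprod_del_nth: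
  "xs \<in> lists S \<Longrightarrow> i < length xs \<Longrightarrow> len (wprod W (del_nth i xs)) \<le> length xs - 1"
  using len_wprod_le[OF lists_del_nth] length_del_nth by metis

text \<open>If m is of minimal length in m W_J, the exchange condition for m h r either deletes a
  letter of m, producing a shorter element of m W_J, or a letter of h r, contradicting
  reducedness.\<close>

lemma len_mult_parabolic_generator:
  assumes J: "J \<subseteq> S" and m: "m \<in> carrier W"
    and minimal: "\<And>h. h \<in> parabolic W J \<Longrightarrow> len m \<le> len (m \<otimes> h)"
    and hs: "hs \<in> lists J" and r: "r \<in> J" and red: "reduced_word W S (hs @ [r]) h"
  shows "len (m \<otimes> wprod W hs \<otimes> r) = len (m \<otimes> wprod W hs) + 1"
proof -
  note l = reduced_word_snocD[OF red]
  let ?h = "wprod W hs"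
  have hc: "?h \<in> carrier W" and rS: "r \<in> S" using l by simp_all
  have "\<not> len (m \<otimes> ?h \<otimes> r) < len (m \<otimes> ?h)"
  proof
    assume shorter: "len (m \<otimes> ?h \<otimes> r) < len (m \<otimes> ?h)"
    obtain ms where ms: "reduced_word W S ms m" using reduced_word_exists m by blast
    then have msl: "ms \<in> lists S" "wprod W ms = m" "length ms = len m" unfolding reduced_word_def by auto
    have "len (wprod W (ms @ hs) \<otimes> r) < len (wprod W (ms @ hs))" using shorter msl l(1) by simp
    from exchange_right_append[OF msl(1) l(1) S_reflection[OF rS] this] msl(1,2) l(1)
    consider (left) i where "i < length ms" "m \<otimes> ?h \<otimes> r = wprod W (del_nth i ms) \<otimes> ?h"
      | (right) j where "j < length hs" "m \<otimes> ?h \<otimes> r = m \<otimes> wprod W (del_nth j hs)"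
      by auto
    then show False
    proof cases
      case left
      have "?h \<otimes> r \<otimes> inv ?h \<in> parabolic W J"
        using hs r J by (intro parabolic_mult parabolic_inv parabolic_wprod parabolic_generator)
      then have "len m \<le> len (m \<otimes> (?h \<otimes> r \<otimes> inv ?h))" by (rule minimal)
      also have "m \<otimes> (?h \<otimes> r \<otimes> inv ?h) = (m \<otimes> ?h \<otimes> r) \<otimes> inv ?h"
        using m hc rS by (simp add: m_assoc)
      also have "\<dots> = wprod W (del_nth i ms)"
        using left(2) hc lists_del_nth[OF msl(1)] by (simp add: m_assoc)
      also have "len \<dots> \<le> length ms - 1" using len_wprod_del_nth[OF msl(1) left(1)] .
      finally show False using left(1) msl(3) by simp
    next
      case right
      then have "wprod W hs \<otimes> r = wprod W (del_nth j hs)"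
        using m hc rS lists_del_nth[OF l(1)] by (simp add: m_assoc)
      then have "len (wprod W hs \<otimes> r) \<le> length hs - 1"
        using len_wprod_del_nth[OF l(1) right(1)] by simp
      then show False using l by simp
    qed
  qed
  then show ?thesis using len_mult_S_cases[of "m \<otimes> ?h" r] m hc rS by auto
qed

lemma len_mult_parabolic:
  assumes J: "J \<subseteq> S" and m: "m \<in> carrier W"
    and minimal: "\<And>h. h \<in> parabolic W J \<Longrightarrow> len m \<le> len (m \<otimes> h)"
    and h: "h \<in> parabolic W J"
  shows "len (m \<otimes> h) = len m + len h"
proof -
  have "hs \<in> lists J \<Longrightarrow> reduced_word W S hs (wprod W hs) \<Longrightarrow>
      len (m \<otimes> wprod W hs) = len m + length hs" for hs
  proof (induct hs rule: rev_induct)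
    case (snoc r hs)
    note l = reduced_word_snocD[OF snoc.prems(2)]
    have "len (m \<otimes> wprod W hs) = len m + length hs"
      using snoc reduced_word_butlast by auto
    moreover have "m \<otimes> wprod W (hs @ [r]) = m \<otimes> wprod W hs \<otimes> r"
      using l m by (simp add: m_assoc)
    ultimately show ?case
      using len_mult_parabolic_generator[OF J m minimal _ _ snoc.prems(2)] snoc.prems(1) by simp
  qed (use m in simp)
  moreover obtain hs where "hs \<in> lists J" "reduced_word W S hs h"
    by (rule parabolic_reduced_word[OF J h])
  ultimately show ?thesis unfolding reduced_word_def by auto
qed

lemma min_rep_eqI:
  assumes "m \<in> {x \<otimes> h | h. h \<in> parabolic W J}"
    and "\<And>v. v \<in> {x \<otimes> h | h. h \<in> parabolic W J} \<Longrightarrow> v \<noteq> m \<Longrightarrow> len m < len v"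
  shows "min_rep W S J x = m"
  unfolding min_rep_def
proof (rule the_equality)
  fix u
  assume u: "u \<in> {x \<otimes> h | h. h \<in> parabolic W J} \<and>
    (\<forall>v\<in>{x \<otimes> h | h. h \<in> parabolic W J}. v \<noteq> u \<longrightarrow> len u < len v)"
  show "u = m"
  proof (rule ccontr)
    assume "u \<noteq> m"
    then have "len m < len u" "len u < len m" using assms u by auto
    then show False by simp
  qed
qed (use assms in blast)

lemma min_rep_exists:
  assumes J: "J \<subseteq> S" and x: "x \<in> carrier W"
  obtains h where "h \<in> parabolic W J" "min_rep W S J x = x \<otimes> h"
    and "\<And>g. g \<in> parabolic W J \<Longrightarrow> len (min_rep W S J x \<otimes> g) = len (min_rep W S J x) + len g"
proof -
  let ?C = "{x \<otimes> h | h. h \<in> parabolic W J}"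
  have "x = x \<otimes> \<one>" using x by simp
  then have "x \<in> ?C" using parabolic_one by blast
  obtain m where "m \<in> ?C \<and> (\<forall>v. v \<in> ?C \<longrightarrow> len m \<le> len v)"
    using ex_has_least_nat[of "\<lambda>v. v \<in> ?C" x len, OF \<open>x \<in> ?C\<close>] by (rule exE)
  then have m: "m \<in> ?C" "\<And>v. v \<in> ?C \<Longrightarrow> len m \<le> len v" by simp_all
  then obtain hm where hm: "hm \<in> parabolic W J" "m = x \<otimes> hm" by blast
  have hmc: "hm \<in> carrier W" using parabolic_closed[OF J hm(1)] .
  have mc: "m \<in> carrier W" using hm hmc x by simp
  have coset: "m \<otimes> g \<in> ?C" if "g \<in> parabolic W J" for g
  proof -
    have "m \<otimes> g = x \<otimes> (hm \<otimes> g)" using hm hmc x parabolic_closed[OF J that] by (simp add: m_assoc)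
    then show ?thesis using parabolic_mult[OF J hm(1) that] by blast
  qed
  have add: "len (m \<otimes> g) = len m + len g" if "g \<in> parabolic W J" for g
    using len_mult_parabolic[OF J mc _ that] coset m(2) by blast
  have "min_rep W S J x = m"
  proof (rule min_rep_eqI[OF m(1)])
    fix v assume v: "v \<in> ?C" "v \<noteq> m"
    then obtain hv where hv: "hv \<in> parabolic W J" "v = x \<otimes> hv" by blast
    let ?g = "inv hm \<otimes> hv"
    have g: "?g \<in> parabolic W J" "?g \<in> carrier W"
      using parabolic_mult[OF J parabolic_inv[OF J hm(1)] hv(1)] parabolic_closed[OF J] by auto
    have "v = m \<otimes> ?g" using hm hv hmc x parabolic_closed[OF J hv(1)] by (simp add: m_assoc)
    moreover have "?g \<noteq> \<one>" using v(2) calculation mc by auto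
    ultimately show "len m < len v" using add[OF g(1)] len_eq_0_iff[OF g(2)] by simp
  qed
  then show ?thesis using that hm add by simp
qed

lemma min_rep_closed: "J \<subseteq> S \<Longrightarrow> x \<in> carrier W \<Longrightarrow> min_rep W S J x \<in> carrier W"
  by (metis min_rep_exists m_closed parabolic_closed)

lemma par_part_parabolic: "J \<subseteq> S \<Longrightarrow> x \<in> carrier W \<Longrightarrow> par_part W S J x \<in> parabolic W J"
proof -
  assume J: "J \<subseteq> S" and x: "x \<in> carrier W"
  obtain h where h: "h \<in> parabolic W J" "min_rep W S J x = x \<otimes> h" by (rule min_rep_exists[OF J x])
  then have "par_part W S J x = inv h"
    unfolding par_part_def using x parabolic_closed[OF J h(1)] by (simp add: inv_mult_group m_assoc)
  then show ?thesis using parabolic_inv[OF J h(1)] by simp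
qed

lemma par_part_closed: "J \<subseteq> S \<Longrightarrow> x \<in> carrier W \<Longrightarrow> par_part W S J x \<in> carrier W"
  using par_part_parabolic parabolic_closed by blast

lemma min_rep_mult_par_part: "J \<subseteq> S \<Longrightarrow> x \<in> carrier W \<Longrightarrow> min_rep W S J x \<otimes> par_part W S J x = x"
  unfolding par_part_def using min_rep_closed by (simp add: m_assoc[symmetric])

lemma len_min_rep_par_part:
  "J \<subseteq> S \<Longrightarrow> x \<in> carrier W \<Longrightarrow> len x = len (min_rep W S J x) + len (par_part W S J x)"
  by (metis min_rep_exists min_rep_mult_par_part par_part_parabolic)

lemma min_rep_mult_parabolic:
  assumes J: "J \<subseteq> S" and x: "x \<in> carrier W" and h: "h \<in> parabolic W J"
  shows "min_rep W S J (x \<otimes> h) = min_rep W S J x"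
proof -
  have hc: "h \<in> carrier W" using parabolic_closed[OF J h] .
  have "{x \<otimes> h \<otimes> g | g. g \<in> parabolic W J} = {x \<otimes> g | g. g \<in> parabolic W J}"
  proof (intro Set.set_eqI iffI)
    fix v assume "v \<in> {x \<otimes> h \<otimes> g | g. g \<in> parabolic W J}"
    then obtain g where g: "g \<in> parabolic W J" "v = x \<otimes> h \<otimes> g" by blast
    then have "v = x \<otimes> (h \<otimes> g)" using x hc parabolic_closed[OF J g(1)] by (simp add: m_assoc)
    then show "v \<in> {x \<otimes> g | g. g \<in> parabolic W J}" using parabolic_mult[OF J h g(1)] by blast
  next
    fix v assume "v \<in> {x \<otimes> g | g. g \<in> parabolic W J}"
    then obtain g where g: "g \<in> parabolic W J" "v = x \<otimes> g" by blast
    then have "v = x \<otimes> h \<otimes> (inv h \<otimes> g)" using x hc parabolic_closed[OF J g(1)] by (simp add: m_assoc)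
    then show "v \<in> {x \<otimes> h \<otimes> g | g. g \<in> parabolic W J}"
      using parabolic_mult[OF J parabolic_inv[OF J h] g(1)] by blast
  qed
  then show ?thesis unfolding min_rep_def by simp
qed

lemma par_part_mult_parabolic:
  assumes J: "J \<subseteq> S" and x: "x \<in> carrier W" and h: "h \<in> parabolic W J"
  shows "par_part W S J (x \<otimes> h) = par_part W S J x \<otimes> h"
  unfolding par_part_def min_rep_mult_parabolic[OF assms]
  using x parabolic_closed[OF J h] min_rep_closed[OF J x] by (simp add: m_assoc)

lemma par_part_parabolic_subgroup:
  assumes J: "J \<subseteq> S" and K: "K \<subseteq> S" and x: "x \<in> parabolic W K"
  shows "par_part W S J x \<in> parabolic W K"
proof -
  have xc: "x \<in> carrier W" using parabolic_closed[OF K x] .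
  obtain ms hs where ms: "reduced_word W S ms (min_rep W S J x)"
    and hs: "reduced_word W S hs (par_part W S J x)"
    using reduced_word_exists min_rep_closed[OF J xc] par_part_closed[OF J xc] by metis
  then have "reduced_word W S (ms @ hs) x"
    using min_rep_mult_par_part[OF J xc] len_min_rep_par_part[OF J xc]
    unfolding reduced_word_def by simp
  then have "set (ms @ hs) \<subseteq> K" using reduced_word_parabolic_letters[OF K _ x] by blast
  then have "hs \<in> lists K" by auto
  then show ?thesis using hs parabolic_wprod unfolding reduced_word_def by metis
qed

lemma reduced_word_supp: "reduced_word W S xs x \<Longrightarrow> set xs \<subseteq> supp W S x"
  unfolding supp_def by blast

lemma supp_subset_parabolic: "K \<subseteq> S \<Longrightarrow> x \<in> parabolic W K \<Longrightarrow> supp W S x \<subseteq> K"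
  unfolding supp_def using reduced_word_parabolic_letters by blast

lemma left_descents_subset_supp:
  assumes "x \<in> carrier W"
  shows "left_descents W S x \<subseteq> supp W S x"
proof
  fix r assume "r \<in> left_descents W S x"
  then have r: "r \<in> S" "len (r \<otimes> x) < len x" unfolding left_descents_def by auto
  have "r \<otimes> x \<in> carrier W" using assms r by simp
  then obtain rs where rs: "reduced_word W S rs (r \<otimes> x)" using reduced_word_exists by blast
  then have "reduced_word W S (r # rs) x"
    using r assms unfolding reduced_word_iff by (simp add: m_assoc[symmetric])
  then show "r \<in> supp W S x" using reduced_word_supp by fastforce
qed

subsection \<open>The middle multiplication map\<close>

definition middle_mult :: "'a set \<Rightarrow> 'a \<Rightarrow> 'a \<Rightarrow> 'a" where
  "middle_mult J s x = min_rep W S J x \<otimes> s \<otimes> par_part W S J x"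

lemma middle_mult_closed:
  "J \<subseteq> S \<Longrightarrow> s \<in> S \<Longrightarrow> x \<in> carrier W \<Longrightarrow> middle_mult J s x \<in> carrier W"
  unfolding middle_mult_def using min_rep_closed par_part_closed by simp

lemma middle_mult_involution:
  assumes J: "J \<subseteq> S" and s: "s \<in> J" and x: "x \<in> carrier W"
  shows "middle_mult J s (middle_mult J s x) = x"
proof -
  let ?m = "min_rep W S J x" and ?p = "par_part W S J x"
  have c: "?m \<in> carrier W" "?p \<in> carrier W" "s \<in> carrier W"
    using min_rep_closed[OF J x] par_part_closed[OF J x] s J by auto
  have p: "?p \<in> parabolic W J" using par_part_parabolic[OF J x] .
  have g: "inv ?p \<otimes> s \<otimes> ?p \<in> parabolic W J"
    using parabolic_mult[OF J parabolic_mult[OF J parabolic_inv[OF J p] parabolic_generator[OF J s]] p] .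
  have "x \<otimes> (inv ?p \<otimes> s \<otimes> ?p) = (?m \<otimes> ?p) \<otimes> (inv ?p \<otimes> s \<otimes> ?p)"
    using min_rep_mult_par_part[OF J x] by simp
  also have "\<dots> = middle_mult J s x" unfolding middle_mult_def using c by (simp add: m_assoc)
  finally have "min_rep W S J (middle_mult J s x) = ?m"
    and "par_part W S J (middle_mult J s x) = s \<otimes> ?p"
    using min_rep_mult_parabolic[OF J x g] par_part_mult_parabolic[OF J x g] c
    by (simp_all add: m_assoc[symmetric])
  then have "middle_mult J s (middle_mult J s x) = ?m \<otimes> s \<otimes> (s \<otimes> ?p)"
    unfolding middle_mult_def[of J s "middle_mult J s x"] by simp
  also have "\<dots> = ?m \<otimes> ?p" using c s J by (auto simp: m_assoc)
  finally show ?thesis using min_rep_mult_par_part[OF J x] by simp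
qed

lemma middle_mult_mult_parabolic:
  assumes J: "J \<subseteq> S" and s: "s \<in> S" and a: "a \<in> carrier W" and b: "b \<in> parabolic W J"
    and commute: "par_part W S J a \<otimes> s = s \<otimes> par_part W S J a"
  shows "middle_mult J s (a \<otimes> b) = a \<otimes> s \<otimes> b"
proof -
  let ?m = "min_rep W S J a" and ?p = "par_part W S J a"
  have c: "?m \<in> carrier W" "?p \<in> carrier W" "b \<in> carrier W"
    using min_rep_closed[OF J a] par_part_closed[OF J a] parabolic_closed[OF J b] by auto
  have "middle_mult J s (a \<otimes> b) = ?m \<otimes> s \<otimes> (?p \<otimes> b)"
    unfolding middle_mult_def min_rep_mult_parabolic[OF J a b] par_part_mult_parabolic[OF J a b] ..
  also have "\<dots> = ?m \<otimes> (?p \<otimes> s) \<otimes> b" using c s commute by (simp add: m_assoc)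
  also have "\<dots> = (?m \<otimes> ?p) \<otimes> s \<otimes> b" using c s by (simp add: m_assoc)
  also have "\<dots> = a \<otimes> s \<otimes> b" using min_rep_mult_par_part[OF J a] by simp
  finally show ?thesis .
qed

lemma bruhat_le_subword_append:
  assumes "bruhat_le W S x w" "reduced_word W S (us @ vs) w"
  obtains ys zs where "subseq ys us" "subseq zs vs" "x = wprod W ys \<otimes> wprod W zs"
proof -
  obtain xs where xs: "subseq xs (us @ vs)" "wprod W xs = x" using bruhat_le_subword[OF assms] by blast
  then obtain ys zs where yz: "xs = ys @ zs" "subseq ys us" "subseq zs vs" by (auto elim: subseq_appendE)
  have "us \<in> lists S" "vs \<in> lists S" using assms(2) unfolding reduced_word_def by auto
  then have "x = wprod W ys \<otimes> wprod W zs"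
    using xs(2) yz lists_subseq[OF yz(2)] lists_subseq[OF yz(3)] by simp
  then show ?thesis using that yz(2,3) by blast
qed

end

lemma bruhat_graph_automorphism_involution:
  assumes closed: "\<And>x. x \<in> bruhat_interval W S \<one>\<^bsub>W\<^esub> w \<Longrightarrow>
      \<phi> x \<in> bruhat_interval W S \<one>\<^bsub>W\<^esub> w"
    and involution: "\<And>x. x \<in> bruhat_interval W S \<one>\<^bsub>W\<^esub> w \<Longrightarrow> \<phi> (\<phi> x) = x"
    and edge: "\<And>x y. x \<in> bruhat_interval W S \<one>\<^bsub>W\<^esub> w \<Longrightarrow>
      y \<in> bruhat_interval W S \<one>\<^bsub>W\<^esub> w \<Longrightarrow>
      bruhat_edge W S x y \<Longrightarrow> bruhat_edge W S (\<phi> x) (\<phi> y)"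
  shows "bruhat_graph_automorphism W S w \<phi>"
  unfolding bruhat_graph_automorphism_def Let_def
proof (intro conjI ballI iffI)
  show "bij_betw \<phi> (bruhat_interval W S \<one>\<^bsub>W\<^esub> w) (bruhat_interval W S \<one>\<^bsub>W\<^esub> w)"
    by (rule bij_betw_byWitness[of _ \<phi>]) (use closed involution in auto)
next
  fix x y assume "x \<in> bruhat_interval W S \<one>\<^bsub>W\<^esub> w" "y \<in> bruhat_interval W S \<one>\<^bsub>W\<^esub> w"
    and "bruhat_edge W S (\<phi> x) (\<phi> y)"
  then show "bruhat_edge W S x y" using edge[of "\<phi> x" "\<phi> y"] closed involution by simp
qed (rule edge)

locale bp_single_common_generator = coxeter +
  fixes J :: "'a set" and w s :: 'a
  assumes J: "J \<subseteq> S" and w: "w \<in> carrier W" and BP: "BP_decomposition W S J w" and s: "s \<in> S"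
    and supp_inter: "supp W S (min_rep W S J w) \<inter> supp W S (par_part W S J w) = {s}"
begin

abbreviation wJ where "wJ \<equiv> min_rep W S J w"
abbreviation w_J where "w_J \<equiv> par_part W S J w"
abbreviation A where "A \<equiv> supp W S wJ"

lemma A_subset: "A \<subseteq> S"
  unfolding supp_def reduced_word_def by auto

lemma supp_w_J_subset: "supp W S w_J \<subseteq> J"
  using supp_subset_parabolic[OF J par_part_parabolic[OF J w]] .

lemma s_in_J: "s \<in> J"
  using supp_inter supp_w_J_subset by auto

lemma A_inter_J: "A \<inter> J \<subseteq> {s}"
  using BP left_descents_subset_supp[OF par_part_closed[OF J w]] supp_inter
  unfolding BP_decomposition_def by auto

lemma s_left_descent: "len (s \<otimes> w_J) < len w_J"
  using BP supp_inter s_in_J unfolding BP_decomposition_def left_descents_def by auto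

lemma reduced_word_w:
  obtains us vs where "reduced_word W S (us @ s # vs) w" "us \<in> lists A" "s # vs \<in> lists J"
proof -
  have c: "wJ \<in> carrier W" "w_J \<in> carrier W"
    using min_rep_closed[OF J w] par_part_closed[OF J w] by auto
  obtain us where us: "reduced_word W S us wJ" using reduced_word_exists c by blast
  have "s \<otimes> w_J \<in> carrier W" using c s by simp
  then obtain vs where vs: "reduced_word W S vs (s \<otimes> w_J)" using reduced_word_exists by blast
  then have svs: "reduced_word W S (s # vs) w_J"
    using s c s_left_descent unfolding reduced_word_iff by (simp add: m_assoc[symmetric])
  then have "reduced_word W S (us @ s # vs) w"
    using us min_rep_mult_par_part[OF J w] len_min_rep_par_part[OF J w]
    unfolding reduced_word_def by simp
  moreover have "us \<in> lists A" using reduced_word_supp[OF us] by auto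
  moreover have "s # vs \<in> lists J" using reduced_word_supp[OF svs] supp_w_J_subset by auto
  ultimately show ?thesis using that by blast
qed

lemma parabolic_A_J_commute_s: "x \<in> parabolic W A \<Longrightarrow> x \<in> parabolic W J \<Longrightarrow> x \<otimes> s = s \<otimes> x"
  using parabolic_inter[OF A_subset J] parabolic_mono[OF A_inter_J] parabolic_singleton_commute s
  by blast

lemma middle_mult_factor:
  assumes a: "a \<in> parabolic W A" and b: "b \<in> parabolic W J"
  shows "middle_mult J s (a \<otimes> b) = a \<otimes> s \<otimes> b"
proof (rule middle_mult_mult_parabolic[OF J s _ b])
  show "a \<in> carrier W" using parabolic_closed[OF A_subset a] .
  then show "par_part W S J a \<otimes> s = s \<otimes> par_part W S J a"
    using parabolic_A_J_commute_s par_part_parabolic_subgroup[OF J A_subset a] par_part_parabolic[OF J]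
    by blast
qed

lemma interval_factor:
  assumes "bruhat_le W S x w"
  obtains a b where "a \<in> parabolic W A" "b \<in> parabolic W J" "x = a \<otimes> b"
proof -
  obtain us vs where "reduced_word W S (us @ s # vs) w" "us \<in> lists A" "s # vs \<in> lists J"
    by (rule reduced_word_w)
  then show ?thesis
    using bruhat_le_subword_append[OF assms] that lists_subseq parabolic_wprod by metis
qed

text \<open>The inserted letter s is either taken from, or cancels against, the first letter s of
  the chosen reduced word of w_J.\<close>

lemma middle_mult_bruhat_le:
  assumes x: "bruhat_le W S x w"
  shows "bruhat_le W S (middle_mult J s x) w"
proof -
  obtain us vs where red: "reduced_word W S (us @ s # vs) w" and us: "us \<in> lists A"
    and vs: "s # vs \<in> lists J"
    by (rule reduced_word_w)
  obtain ys zs where ys: "subseq ys us" and zs: "subseq zs (s # vs)"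
    and xe: "x = wprod W ys \<otimes> wprod W zs"
    by (rule bruhat_le_subword_append[OF x red])
  have ysA: "ys \<in> lists A" and zsJ: "zs \<in> lists J" using lists_subseq[OF ys us] lists_subseq[OF zs vs] .
  have ysS: "ys \<in> lists S" and zsS: "zs \<in> lists S" using ysA zsJ A_subset J by auto
  obtain zs' where zs': "subseq zs' (s # vs)" "wprod W zs' = s \<otimes> wprod W zs"
  proof (cases zs)
    case (Cons z zs'')
    show ?thesis
    proof (cases "z = s \<and> subseq zs'' vs")
      case True
      then show ?thesis using that[of zs''] Cons zsS s by (simp add: list_emb_Cons)
    next
      case False
      then have "subseq zs vs" using zs Cons by (auto split: if_splits)
      then show ?thesis using that[of "s # zs"] by simp
    qed
  qed (use that[of "[s]"] s in simp)
  have "middle_mult J s x = wprod W ys \<otimes> (s \<otimes> wprod W zs)"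
    using middle_mult_factor[OF parabolic_wprod[OF ysA] parabolic_wprod[OF zsJ]] xe ysS zsS s
    by (simp add: m_assoc)
  also have "\<dots> = wprod W (ys @ zs')"
    using zs'(2) ysS subsetD[OF lists_mono[OF J] lists_subseq[OF zs'(1) vs]] by simp
  finally show ?thesis
    using subword_bruhat_le[OF red] list_emb_append_mono[OF ys zs'(1)] by simp
qed

lemma middle_mult_bruhat_edge:
  assumes x: "bruhat_le W S x w" and y: "bruhat_le W S y w" and e: "bruhat_edge W S x y"
  shows "bruhat_edge W S (middle_mult J s x) (middle_mult J s y)"
proof -
  obtain a b where a: "a \<in> parabolic W A" and b: "b \<in> parabolic W J" and xe: "x = a \<otimes> b"
    by (rule interval_factor[OF x])
  obtain c d where c: "c \<in> parabolic W A" and d: "d \<in> parabolic W J" and ye: "y = c \<otimes> d"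
    by (rule interval_factor[OF y])
  have car: "a \<in> carrier W" "b \<in> carrier W" "c \<in> carrier W" "d \<in> carrier W" "s \<in> carrier W"
    using a b c d s parabolic_closed A_subset J by auto
  define \<alpha> where "\<alpha> = inv a \<otimes> c"
  define \<beta> where "\<beta> = d \<otimes> inv b"
  have \<alpha>A: "\<alpha> \<in> parabolic W A" unfolding \<alpha>_def using A_subset a c by (intro parabolic_mult parabolic_inv)
  have \<beta>J: "\<beta> \<in> parabolic W J" unfolding \<beta>_def using J b d by (intro parabolic_mult parabolic_inv)
  have \<alpha>\<beta>: "\<alpha> \<in> carrier W" "\<beta> \<in> carrier W" unfolding \<alpha>_def \<beta>_def using car by simp_all
  have "inv x \<otimes> y \<in> T" using bruhat_edge_iff e x y bruhat_le_closed by blast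
  then have "b \<otimes> (inv x \<otimes> y) \<otimes> inv b \<in> T" using reflection_conj car by simp
  then have t: "\<alpha> \<otimes> \<beta> \<in> T" unfolding \<alpha>_def \<beta>_def xe ye using car by (simp add: m_assoc inv_mult_group)
  have "s \<otimes> \<alpha> \<otimes> s \<otimes> \<beta> \<in> T"
    using reflection_mult_parabolic[OF A_subset J \<alpha>A \<beta>J t]
  proof
    assume "\<alpha> \<in> parabolic W (A \<inter> J)"
    then have "\<alpha> \<otimes> s = s \<otimes> \<alpha>" using parabolic_A_J_commute_s parabolic_mono by blast
    then have "s \<otimes> \<alpha> \<otimes> s \<otimes> \<beta> = s \<otimes> (s \<otimes> \<alpha>) \<otimes> \<beta>" using \<alpha>\<beta> car by (simp add: m_assoc)
    then show ?thesis using t \<alpha>\<beta> s by simp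
  next
    assume "\<beta> \<in> parabolic W (A \<inter> J)"
    then have "\<beta> \<otimes> s = s \<otimes> \<beta>" using parabolic_A_J_commute_s parabolic_mono by blast
    then have "s \<otimes> \<alpha> \<otimes> s \<otimes> \<beta> = s \<otimes> (\<alpha> \<otimes> \<beta>) \<otimes> inv s"
      using \<alpha>\<beta> car s by (simp add: m_assoc)
    then show ?thesis using reflection_conj[OF t] car by simp
  qed
  then have "inv b \<otimes> (s \<otimes> \<alpha> \<otimes> s \<otimes> \<beta>) \<otimes> inv (inv b) \<in> T"
    using reflection_conj inv_closed car(2) by blast
  moreover have "inv (a \<otimes> s \<otimes> b) \<otimes> (c \<otimes> s \<otimes> d) = inv b \<otimes> (s \<otimes> \<alpha> \<otimes> s \<otimes> \<beta>) \<otimes> inv (inv b)"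
    unfolding \<alpha>_def \<beta>_def using car s by (simp add: m_assoc inv_mult_group)
  ultimately show ?thesis
    using bruhat_edge_iff middle_mult_factor a b c d xe ye car by simp
qed

theorem middle_mult_bruhat_graph_automorphism:
  "bruhat_graph_automorphism W S w (middle_mult J s)"
proof (rule bruhat_graph_automorphism_involution)
  fix x assume "x \<in> bruhat_interval W S \<one> w"
  then have x: "bruhat_le W S x w" "x \<in> carrier W" unfolding bruhat_interval_def bruhat_le_def by auto
  show "middle_mult J s x \<in> bruhat_interval W S \<one> w"
    unfolding bruhat_interval_def
    using middle_mult_bruhat_le[OF x(1)] one_bruhat_le middle_mult_closed[OF J s x(2)] by simp
  show "middle_mult J s (middle_mult J s x) = x" using middle_mult_involution[OF J s_in_J x(2)] .
next
  fix x y assume "x \<in> bruhat_interval W S \<one> w" "y \<in> bruhat_interval W S \<one> w"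
    "bruhat_edge W S x y"
  then show "bruhat_edge W S (middle_mult J s x) (middle_mult J s y)"
    using middle_mult_bruhat_edge unfolding bruhat_interval_def by blast
qed

end

theorem proposition3p4:
  fixes W :: "('a, 'b) monoid_scheme" and S J :: "'a set" and w s :: 'a
  assumes "coxeter_system W S"
    and "w \<in> carrier W"
    and "J \<subseteq> S"
    and "BP_decomposition W S J w"
    and "s \<in> S"
    and "supp W S (min_rep W S J w) \<inter> supp W S (par_part W S J w) = {s}"
  shows "bruhat_graph_automorphism W S w
           (\<lambda>x. min_rep W S J x \<otimes>\<^bsub>W\<^esub> s \<otimes>\<^bsub>W\<^esub> par_part W S J x)"
proof -
  have "group W" using assms(1) unfolding coxeter_system_def by blast
  then interpret bp_single_common_generator W S J w s
    by (intro bp_single_common_generator.intro coxeter.intro coxeter_axioms.intro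
        bp_single_common_generator_axioms.intro) (use assms in auto)
  show ?thesis using middle_mult_bruhat_graph_automorphism unfolding middle_mult_def .
qed

end
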